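(* Let $(\mathbb{C},P)$ be an extensional, cauchy-complete regular doctrine with full comprehensions. Then a morphism $f:A\to B$ of $\mathbb{C}$ is a monomorphism if and only if it is a comprehension of some formula $\beta\in P(B)$ (i.e. $f=\lfloor\beta\rfloor\circ k$ for some isomorphism $k$; one may take $\beta=\exists_f\top_A$).
   Context: A regular doctrine is $(\mathbb{C},P)$, $\mathbb{C}$ non-empty with binary products, $P:\mathbb{C}^{op}\to$ inf-semilattices, with $f^*=P(f)$ having left adjoints $\exists_f$ satisfying Beck–Chevalley and Frobenius reciprocity; $\delta_A=\exists_{\langle id_A,id_A\rangle}\top_A$. Full comprehension of $\alpha\in P(A)$: $\lfloor\alpha\rfloor:X\to A$ with $\lfloor\alpha\rfloor^*\alpha=\top_X$, universal among arrows $f$ with $f^*\alpha=\top$ (unique factorization), and with $\lfloor\alpha\rfloor^*\alpha\le\lfloor\alpha\rfloor^*\beta$ iff $\alpha\le\beta$. Extensional: for parallel $f,g:X\to A$, $f=g$ iff $\top_X\le\langle f,g\rangle^*\delta_A$. A formula $F\in P(Y\times A)$ is functional from $Y$ to $A$ if $\top_Y\le\exists_{\pi_1}F$ (where $\pi_1:Y\times A\to Y$) and $\langle\pi_1,\pi_2\rangle^*F\wedge\langle\pi_1,\pi_3\rangle^*F\le\langle\pi_2,\pi_3\rangle^*\delta_A$ in $P(Y\times A\times A)$. An object $A$ is cauchy-complete if for every $Y$ and every $F$ functional from $Y$ to $A$ there is $f:Y\to A$ with $(f\times id_A)^*\delta_A=F$; the doctrine is cauchy-complete if all objects are. *)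

theory Defs
  imports Main
begin

text \<open>Objects have type 'o, arrows type 'a,
  formulas type 'p; P(A) is the set Pr A with order leq A, top tp A and
  binary meet mt A.  rdx f is reindexing f^*, ex f is the left adjoint
  \<exists>_f.  cmp g f is the composite g \<circ> f.\<close>

record ('o, 'a, 'p) doctrine =
  Ob   :: "'o set"
  Ar   :: "'a set"
  dom  :: "'a \<Rightarrow> 'o"
  cod  :: "'a \<Rightarrow> 'o"
  cmp  :: "'a \<Rightarrow> 'a \<Rightarrow> 'a"
  idt  :: "'o \<Rightarrow> 'a"
  prd  :: "'o \<Rightarrow> 'o \<Rightarrow> 'o"
  pr1  :: "'o \<Rightarrow> 'o \<Rightarrow> 'a"
  pr2  :: "'o \<Rightarrow> 'o \<Rightarrow> 'a"
  pair :: "'a \<Rightarrow> 'a \<Rightarrow> 'a"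
  Pr   :: "'o \<Rightarrow> 'p set"
  leq  :: "'o \<Rightarrow> 'p \<Rightarrow> 'p \<Rightarrow> bool"
  tp   :: "'o \<Rightarrow> 'p"
  mt   :: "'o \<Rightarrow> 'p \<Rightarrow> 'p \<Rightarrow> 'p"
  rdx  :: "'a \<Rightarrow> 'p \<Rightarrow> 'p"
  ex   :: "'a \<Rightarrow> 'p \<Rightarrow> 'p"

definition hom :: "('o, 'a, 'p, 'x) doctrine_scheme \<Rightarrow> 'o \<Rightarrow> 'o \<Rightarrow> 'a set" where
  "hom D X Y = {f \<in> Ar D. dom D f = X \<and> cod D f = Y}"

definition is_category :: "('o, 'a, 'p, 'x) doctrine_scheme \<Rightarrow> bool" where
  "is_category D \<longleftrightarrow>
     (\<forall>f \<in> Ar D. dom D f \<in> Ob D \<and> cod D f \<in> Ob D) \<and>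
     (\<forall>A \<in> Ob D. idt D A \<in> hom D A A) \<and>
     (\<forall>f \<in> Ar D. \<forall>g \<in> Ar D. cod D f = dom D g \<longrightarrow>
         cmp D g f \<in> hom D (dom D f) (cod D g)) \<and>
     (\<forall>f \<in> Ar D. cmp D (idt D (cod D f)) f = f \<and> cmp D f (idt D (dom D f)) = f) \<and>
     (\<forall>f \<in> Ar D. \<forall>g \<in> Ar D. \<forall>h \<in> Ar D. cod D f = dom D g \<longrightarrow> cod D g = dom D h \<longrightarrow>
         cmp D h (cmp D g f) = cmp D (cmp D h g) f)"

definition has_binary_products :: "('o, 'a, 'p, 'x) doctrine_scheme \<Rightarrow> bool" where
  "has_binary_products D \<longleftrightarrow>
     (\<forall>A \<in> Ob D. \<forall>B \<in> Ob D.
        prd D A B \<in> Ob D \<and>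
        pr1 D A B \<in> hom D (prd D A B) A \<and>
        pr2 D A B \<in> hom D (prd D A B) B \<and>
        (\<forall>X \<in> Ob D. \<forall>f \<in> hom D X A. \<forall>g \<in> hom D X B.
           pair D f g \<in> hom D X (prd D A B) \<and>
           cmp D (pr1 D A B) (pair D f g) = f \<and>
           cmp D (pr2 D A B) (pair D f g) = g \<and>
           (\<forall>h \<in> hom D X (prd D A B).
              cmp D (pr1 D A B) h = f \<longrightarrow> cmp D (pr2 D A B) h = g \<longrightarrow> h = pair D f g)))"

definition is_pullback ::
  "('o, 'a, 'p, 'x) doctrine_scheme \<Rightarrow> 'a \<Rightarrow> 'a \<Rightarrow> 'a \<Rightarrow> 'a \<Rightarrow> bool" where
  \<comment> \<open>square  p : D0 \<rightarrow> A,  q : D0 \<rightarrow> B,  f : A \<rightarrow> C,  g : B \<rightarrow> C,  f p = g q, universal\<close>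
  "is_pullback D f g p q \<longleftrightarrow>
     f \<in> Ar D \<and> g \<in> Ar D \<and> p \<in> Ar D \<and> q \<in> Ar D \<and>
     cod D f = cod D g \<and> cod D p = dom D f \<and> cod D q = dom D g \<and> dom D p = dom D q \<and>
     cmp D f p = cmp D g q \<and>
     (\<forall>X \<in> Ob D. \<forall>u \<in> hom D X (dom D f). \<forall>v \<in> hom D X (dom D g).
        cmp D f u = cmp D g v \<longrightarrow>
        (\<exists>!w. w \<in> hom D X (dom D p) \<and> cmp D p w = u \<and> cmp D q w = v))"

definition is_inf_semilattice :: "('o, 'a, 'p, 'x) doctrine_scheme \<Rightarrow> 'o \<Rightarrow> bool" where
  "is_inf_semilattice D A \<longleftrightarrow>
     (\<forall>a \<in> Pr D A. leq D A a a) \<and>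
     (\<forall>a \<in> Pr D A. \<forall>b \<in> Pr D A. leq D A a b \<longrightarrow> leq D A b a \<longrightarrow> a = b) \<and>
     (\<forall>a \<in> Pr D A. \<forall>b \<in> Pr D A. \<forall>c \<in> Pr D A. leq D A a b \<longrightarrow> leq D A b c \<longrightarrow> leq D A a c) \<and>
     tp D A \<in> Pr D A \<and> (\<forall>a \<in> Pr D A. leq D A a (tp D A)) \<and>
     (\<forall>a \<in> Pr D A. \<forall>b \<in> Pr D A.
        mt D A a b \<in> Pr D A \<and> leq D A (mt D A a b) a \<and> leq D A (mt D A a b) b \<and>
        (\<forall>c \<in> Pr D A. leq D A c a \<longrightarrow> leq D A c b \<longrightarrow> leq D A c (mt D A a b)))"

definition is_doctrine :: "('o, 'a, 'p, 'x) doctrine_scheme \<Rightarrow> bool" where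
  "is_doctrine D \<longleftrightarrow>
     (\<forall>A \<in> Ob D. is_inf_semilattice D A) \<and>
     (\<forall>f \<in> Ar D.
        (\<forall>b \<in> Pr D (cod D f). rdx D f b \<in> Pr D (dom D f)) \<and>
        (\<forall>a \<in> Pr D (cod D f). \<forall>b \<in> Pr D (cod D f).
           leq D (cod D f) a b \<longrightarrow> leq D (dom D f) (rdx D f a) (rdx D f b)) \<and>
        rdx D f (tp D (cod D f)) = tp D (dom D f) \<and>
        (\<forall>a \<in> Pr D (cod D f). \<forall>b \<in> Pr D (cod D f).
           rdx D f (mt D (cod D f) a b) = mt D (dom D f) (rdx D f a) (rdx D f b))) \<and>
     (\<forall>A \<in> Ob D. \<forall>a \<in> Pr D A. rdx D (idt D A) a = a) \<and>
     (\<forall>f \<in> Ar D. \<forall>g \<in> Ar D. cod D f = dom D g \<longrightarrow>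
        (\<forall>c \<in> Pr D (cod D g). rdx D (cmp D g f) c = rdx D f (rdx D g c)))"

definition is_regular_doctrine :: "('o, 'a, 'p, 'x) doctrine_scheme \<Rightarrow> bool" where
  "is_regular_doctrine D \<longleftrightarrow>
     is_category D \<and> Ob D \<noteq> {} \<and> has_binary_products D \<and> is_doctrine D \<and>
     \<comment> \<open>left adjoints \<exists>_f \<stileturn> f^*\<close>
     (\<forall>f \<in> Ar D.
        (\<forall>a \<in> Pr D (dom D f). ex D f a \<in> Pr D (cod D f)) \<and>
        (\<forall>a \<in> Pr D (dom D f). \<forall>b \<in> Pr D (cod D f).
           leq D (cod D f) (ex D f a) b \<longleftrightarrow> leq D (dom D f) a (rdx D f b))) \<and>
     \<comment> \<open>Beck--Chevalley for every pullback square\<close>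
     (\<forall>f g p q. is_pullback D f g p q \<longrightarrow>
        (\<forall>a \<in> Pr D (dom D f). rdx D g (ex D f a) = ex D q (rdx D p a))) \<and>
     \<comment> \<open>Frobenius reciprocity\<close>
     (\<forall>f \<in> Ar D. \<forall>a \<in> Pr D (dom D f). \<forall>b \<in> Pr D (cod D f).
        ex D f (mt D (dom D f) (rdx D f b) a) = mt D (cod D f) b (ex D f a))"

definition delta :: "('o, 'a, 'p, 'x) doctrine_scheme \<Rightarrow> 'o \<Rightarrow> 'p" where
  "delta D A = ex D (pair D (idt D A) (idt D A)) (tp D A)"

definition is_mono :: "('o, 'a, 'p, 'x) doctrine_scheme \<Rightarrow> 'a \<Rightarrow> bool" where
  "is_mono D f \<longleftrightarrow> f \<in> Ar D \<and>
     (\<forall>X \<in> Ob D. \<forall>g \<in> hom D X (dom D f). \<forall>h \<in> hom D X (dom D f).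
        cmp D f g = cmp D f h \<longrightarrow> g = h)"

definition is_iso :: "('o, 'a, 'p, 'x) doctrine_scheme \<Rightarrow> 'a \<Rightarrow> bool" where
  "is_iso D k \<longleftrightarrow> k \<in> Ar D \<and>
     (\<exists>l \<in> hom D (cod D k) (dom D k).
        cmp D l k = idt D (dom D k) \<and> cmp D k l = idt D (cod D k))"

definition is_full_comprehension ::
  "('o, 'a, 'p, 'x) doctrine_scheme \<Rightarrow> 'o \<Rightarrow> 'p \<Rightarrow> 'a \<Rightarrow> bool" where
  "is_full_comprehension D A a c \<longleftrightarrow>
     c \<in> Ar D \<and> cod D c = A \<and> rdx D c a = tp D (dom D c) \<and>
     (\<forall>Y \<in> Ob D. \<forall>f \<in> hom D Y A. rdx D f a = tp D Y \<longrightarrow>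
        (\<exists>!h. h \<in> hom D Y (dom D c) \<and> cmp D c h = f)) \<and>
     (\<forall>b \<in> Pr D A. leq D (dom D c) (rdx D c a) (rdx D c b) \<longleftrightarrow> leq D A a b)"

definition has_full_comprehensions :: "('o, 'a, 'p, 'x) doctrine_scheme \<Rightarrow> bool" where
  "has_full_comprehensions D \<longleftrightarrow>
     (\<forall>A \<in> Ob D. \<forall>a \<in> Pr D A. \<exists>c. is_full_comprehension D A a c)"

definition is_extensional :: "('o, 'a, 'p, 'x) doctrine_scheme \<Rightarrow> bool" where
  "is_extensional D \<longleftrightarrow>
     (\<forall>X \<in> Ob D. \<forall>A \<in> Ob D. \<forall>f \<in> hom D X A. \<forall>g \<in> hom D X A.
        f = g \<longleftrightarrow> leq D X (tp D X) (rdx D (pair D f g) (delta D A)))"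

definition is_functional ::
  "('o, 'a, 'p, 'x) doctrine_scheme \<Rightarrow> 'o \<Rightarrow> 'o \<Rightarrow> 'p \<Rightarrow> bool" where
  "is_functional D Y A F \<longleftrightarrow>
     F \<in> Pr D (prd D Y A) \<and>
     leq D Y (tp D Y) (ex D (pr1 D Y A) F) \<and>
     (let YAA = prd D Y (prd D A A);
          p1 = pr1 D Y (prd D A A);
          p2 = cmp D (pr1 D A A) (pr2 D Y (prd D A A));
          p3 = cmp D (pr2 D A A) (pr2 D Y (prd D A A))
      in leq D YAA (mt D YAA (rdx D (pair D p1 p2) F) (rdx D (pair D p1 p3) F))
                   (rdx D (pair D p2 p3) (delta D A)))"

definition cauchy_complete_object :: "('o, 'a, 'p, 'x) doctrine_scheme \<Rightarrow> 'o \<Rightarrow> bool" where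
  "cauchy_complete_object D A \<longleftrightarrow>
     (\<forall>Y \<in> Ob D. \<forall>F. is_functional D Y A F \<longrightarrow>
        (\<exists>f \<in> hom D Y A.
           rdx D (pair D (cmp D f (pr1 D Y A)) (pr2 D Y A)) (delta D A) = F))"

definition is_cauchy_complete :: "('o, 'a, 'p, 'x) doctrine_scheme \<Rightarrow> bool" where
  "is_cauchy_complete D \<longleftrightarrow> (\<forall>A \<in> Ob D. cauchy_complete_object D A)"

end

theory Submission
  imports Defs
begin

text \<open>
  A mono f : A \<rightarrow> B factors as f = c \<circ> k through the comprehension c : C \<rightarrow> B of
  \<exists>_f \<top>.  Since c is mono, the square (f, c, id, k) is a pullback, so Beck--Chevalley
  gives \<exists>_k \<top> = c^* \<exists>_f \<top> = \<top>.  The formula F(y, x) := \<delta>_B(c y, f x) on C \<times> A is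
  therefore total, witnessed along k, and single-valued because f is mono;
  extensionality is what turns the equations between arrows into truths of \<delta>.
  Cauchy-completeness yields g : C \<rightarrow> A with F(y, x) = \<delta>_A(g y, x); evaluating at
  (y, g y) gives c = f \<circ> g, and g is inverse to k because c and f are mono.
  Conversely, comprehensions are mono by their universal property.
\<close>

locale regular_doctrine =
  fixes D :: "('o, 'a, 'p) doctrine"
  assumes regular: "is_regular_doctrine D"
begin

lemma category: "is_category D"
  and products: "has_binary_products D"
  and doctrine: "is_doctrine D"
  using regular unfolding is_regular_doctrine_def by blast+

lemma homI: "f \<in> Ar D \<Longrightarrow> f \<in> hom D (dom D f) (cod D f)"
  and homD: "f \<in> hom D X Y \<Longrightarrow> f \<in> Ar D \<and> dom D f = X \<and> cod D f = Y"
  by (simp_all add: hom_def)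

lemma dom_cod_in_Ob: "f \<in> Ar D \<Longrightarrow> dom D f \<in> Ob D \<and> cod D f \<in> Ob D"
  using category unfolding is_category_def by blast

lemma comp_in_hom: "f \<in> hom D X Y \<Longrightarrow> g \<in> hom D Y Z \<Longrightarrow> cmp D g f \<in> hom D X Z"
  and comp_id_left: "f \<in> hom D X Y \<Longrightarrow> cmp D (idt D Y) f = f"
  and comp_id_right: "f \<in> hom D X Y \<Longrightarrow> cmp D f (idt D X) = f"
  and comp_assoc: "f \<in> hom D X Y \<Longrightarrow> g \<in> hom D Y Z \<Longrightarrow> h \<in> hom D Z W \<Longrightarrow>
     cmp D h (cmp D g f) = cmp D (cmp D h g) f"
  using category unfolding is_category_def hom_def by auto

lemma id_in_hom: "A \<in> Ob D \<Longrightarrow> idt D A \<in> hom D A A"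
  using category unfolding is_category_def by blast

context
  fixes A B assumes A: "A \<in> Ob D" and B: "B \<in> Ob D"
begin

lemma prd_in_Ob: "prd D A B \<in> Ob D"
  and pr1_in_hom: "pr1 D A B \<in> hom D (prd D A B) A"
  and pr2_in_hom: "pr2 D A B \<in> hom D (prd D A B) B"
  using products A B unfolding has_binary_products_def by blast+

lemma pair_in_hom: "X \<in> Ob D \<Longrightarrow> f \<in> hom D X A \<Longrightarrow> g \<in> hom D X B \<Longrightarrow>
     pair D f g \<in> hom D X (prd D A B)"
  and pr1_pair: "X \<in> Ob D \<Longrightarrow> f \<in> hom D X A \<Longrightarrow> g \<in> hom D X B \<Longrightarrow>
     cmp D (pr1 D A B) (pair D f g) = f"
  and pr2_pair: "X \<in> Ob D \<Longrightarrow> f \<in> hom D X A \<Longrightarrow> g \<in> hom D X B \<Longrightarrow>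
     cmp D (pr2 D A B) (pair D f g) = g"
  and pair_unique: "X \<in> Ob D \<Longrightarrow> f \<in> hom D X A \<Longrightarrow> g \<in> hom D X B \<Longrightarrow>
     h \<in> hom D X (prd D A B) \<Longrightarrow> cmp D (pr1 D A B) h = f \<Longrightarrow> cmp D (pr2 D A B) h = g \<Longrightarrow>
     h = pair D f g"
  using products A B unfolding has_binary_products_def by blast+

end

lemma pair_comp:
  assumes "A \<in> Ob D" "B \<in> Ob D" "X \<in> Ob D" "Y \<in> Ob D"
    and a: "a \<in> hom D Y A" and b: "b \<in> hom D Y B" and h: "h \<in> hom D X Y"
  shows "cmp D (pair D a b) h = pair D (cmp D a h) (cmp D b h)"
proof (rule pair_unique)
  have ab: "pair D a b \<in> hom D Y (prd D A B)" using assms pair_in_hom by blast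
  show "cmp D (pair D a b) h \<in> hom D X (prd D A B)" using ab h comp_in_hom by blast
  show "cmp D (pr1 D A B) (cmp D (pair D a b) h) = cmp D a h"
    using comp_assoc[OF h ab pr1_in_hom] pr1_pair assms by simp
  show "cmp D (pr2 D A B) (cmp D (pair D a b) h) = cmp D b h"
    using comp_assoc[OF h ab pr2_in_hom] pr2_pair assms by simp
qed (use assms comp_in_hom in auto)

lemma pair_prod_comp_pair:
  assumes A: "A \<in> Ob D" and B: "B \<in> Ob D" and "A' \<in> Ob D" "B' \<in> Ob D" and Y: "Y \<in> Ob D"
    and a: "a \<in> hom D A A'" and b: "b \<in> hom D B B'"
    and u: "u \<in> hom D Y A" and v: "v \<in> hom D Y B"
  shows "cmp D (pair D (cmp D a (pr1 D A B)) (cmp D b (pr2 D A B))) (pair D u v)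
       = pair D (cmp D a u) (cmp D b v)"
proof -
  have p1: "cmp D a (pr1 D A B) \<in> hom D (prd D A B) A'"
    using comp_in_hom[OF pr1_in_hom[OF A B] a] .
  have p2: "cmp D b (pr2 D A B) \<in> hom D (prd D A B) B'"
    using comp_in_hom[OF pr2_in_hom[OF A B] b] .
  have uv: "pair D u v \<in> hom D Y (prd D A B)" using pair_in_hom[OF A B Y u v] .
  have "cmp D (cmp D a (pr1 D A B)) (pair D u v) = cmp D a u"
    using comp_assoc[OF uv pr1_in_hom[OF A B] a] pr1_pair[OF A B Y u v] by simp
  moreover have "cmp D (cmp D b (pr2 D A B)) (pair D u v) = cmp D b v"
    using comp_assoc[OF uv pr2_in_hom[OF A B] b] pr2_pair[OF A B Y u v] by simp
  ultimately show ?thesis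
    using pair_comp[OF assms(3,4) Y prd_in_Ob[OF A B] p1 p2 uv] by simp
qed

lemma inf_semilattice: "A \<in> Ob D \<Longrightarrow> is_inf_semilattice D A"
  using doctrine unfolding is_doctrine_def by blast

context
  fixes A assumes A: "A \<in> Ob D"
begin

lemma leq_refl: "a \<in> Pr D A \<Longrightarrow> leq D A a a"
  and leq_antisym: "a \<in> Pr D A \<Longrightarrow> b \<in> Pr D A \<Longrightarrow> leq D A a b \<Longrightarrow> leq D A b a \<Longrightarrow> a = b"
  and tp_in_Pr: "tp D A \<in> Pr D A"
  and leq_tp: "a \<in> Pr D A \<Longrightarrow> leq D A a (tp D A)"
  and mt_in_Pr: "a \<in> Pr D A \<Longrightarrow> b \<in> Pr D A \<Longrightarrow> mt D A a b \<in> Pr D A"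
  and mt_leq1: "a \<in> Pr D A \<Longrightarrow> b \<in> Pr D A \<Longrightarrow> leq D A (mt D A a b) a"
  and mt_leq2: "a \<in> Pr D A \<Longrightarrow> b \<in> Pr D A \<Longrightarrow> leq D A (mt D A a b) b"
  using inf_semilattice[OF A] unfolding is_inf_semilattice_def by blast+

lemma tp_leq_iff: "a \<in> Pr D A \<Longrightarrow> leq D A (tp D A) a \<longleftrightarrow> a = tp D A"
  using leq_antisym leq_tp leq_refl tp_in_Pr by blast

lemma mt_eq_tpD:
  assumes "a \<in> Pr D A" "b \<in> Pr D A" "mt D A a b = tp D A"
  shows "a = tp D A" and "b = tp D A"
  using assms mt_leq1 mt_leq2 tp_leq_iff by metis+

end

lemma rdx_in_Pr: "f \<in> hom D X Y \<Longrightarrow> b \<in> Pr D Y \<Longrightarrow> rdx D f b \<in> Pr D X"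
  and rdx_mono: "f \<in> hom D X Y \<Longrightarrow> a \<in> Pr D Y \<Longrightarrow> b \<in> Pr D Y \<Longrightarrow> leq D Y a b \<Longrightarrow>
     leq D X (rdx D f a) (rdx D f b)"
  and rdx_tp: "f \<in> hom D X Y \<Longrightarrow> rdx D f (tp D Y) = tp D X"
  and rdx_mt: "f \<in> hom D X Y \<Longrightarrow> a \<in> Pr D Y \<Longrightarrow> b \<in> Pr D Y \<Longrightarrow>
     rdx D f (mt D Y a b) = mt D X (rdx D f a) (rdx D f b)"
  and rdx_comp: "f \<in> hom D X Y \<Longrightarrow> g \<in> hom D Y Z \<Longrightarrow> c \<in> Pr D Z \<Longrightarrow>
     rdx D (cmp D g f) c = rdx D f (rdx D g c)"
  using doctrine unfolding is_doctrine_def hom_def by auto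

lemma rdx_id: "A \<in> Ob D \<Longrightarrow> a \<in> Pr D A \<Longrightarrow> rdx D (idt D A) a = a"
  using doctrine unfolding is_doctrine_def by blast

lemma ex_in_Pr: "f \<in> hom D X Y \<Longrightarrow> a \<in> Pr D X \<Longrightarrow> ex D f a \<in> Pr D Y"
  and ex_leq_iff: "f \<in> hom D X Y \<Longrightarrow> a \<in> Pr D X \<Longrightarrow> b \<in> Pr D Y \<Longrightarrow>
     leq D Y (ex D f a) b \<longleftrightarrow> leq D X a (rdx D f b)"
  using regular unfolding is_regular_doctrine_def hom_def by auto

lemma beck_chevalley:
  "is_pullback D f g p q \<Longrightarrow> a \<in> Pr D (dom D f) \<Longrightarrow> rdx D g (ex D f a) = ex D q (rdx D p a)"
  using regular unfolding is_regular_doctrine_def by blast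

lemma delta_in_Pr: "A \<in> Ob D \<Longrightarrow> delta D A \<in> Pr D (prd D A A)"
  unfolding delta_def using ex_in_Pr pair_in_hom id_in_hom tp_in_Pr by blast

lemma rdx_rdx_pair:
  assumes "A \<in> Ob D" "B \<in> Ob D" "X \<in> Ob D" "Y \<in> Ob D"
    and a: "a \<in> hom D Y A" and b: "b \<in> hom D Y B" and h: "h \<in> hom D X Y"
    and \<phi>: "\<phi> \<in> Pr D (prd D A B)"
  shows "rdx D h (rdx D (pair D a b) \<phi>) = rdx D (pair D (cmp D a h) (cmp D b h)) \<phi>"
  using rdx_comp[OF h pair_in_hom[OF assms(1,2,4) a b] \<phi>] pair_comp[OF assms(1-4) a b h] by simp

lemma rdx_ex_tp:
  assumes f: "f \<in> hom D A B" and A: "A \<in> Ob D"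
  shows "rdx D f (ex D f (tp D A)) = tp D A"
proof -
  have ex_tp: "ex D f (tp D A) \<in> Pr D B" using ex_in_Pr[OF f tp_in_Pr[OF A]] .
  have "leq D A (tp D A) (rdx D f (ex D f (tp D A)))"
    using ex_leq_iff[OF f tp_in_Pr[OF A] ex_tp] leq_refl[OF _ ex_tp] f homD dom_cod_in_Ob
    by metis
  then show ?thesis using tp_leq_iff[OF A rdx_in_Pr[OF f ex_tp]] by simp
qed

lemma extensional_eq_iff:
  assumes "is_extensional D" "X \<in> Ob D" "A \<in> Ob D" "f \<in> hom D X A" "g \<in> hom D X A"
  shows "f = g \<longleftrightarrow> rdx D (pair D f g) (delta D A) = tp D X"
proof -
  have "rdx D (pair D f g) (delta D A) \<in> Pr D X"
    using assms rdx_in_Pr pair_in_hom delta_in_Pr by blast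
  then show ?thesis
    using assms tp_leq_iff unfolding is_extensional_def by blast
qed

lemma leq_if_forced:
  assumes "has_full_comprehensions D" and X: "X \<in> Ob D" and a: "a \<in> Pr D X" and b: "b \<in> Pr D X"
    and forced: "\<And>Y h. Y \<in> Ob D \<Longrightarrow> h \<in> hom D Y X \<Longrightarrow> rdx D h a = tp D Y \<Longrightarrow> rdx D h b = tp D Y"
  shows "leq D X a b"
proof -
  obtain m where m: "is_full_comprehension D X a m"
    using assms unfolding has_full_comprehensions_def by blast
  then have mh: "m \<in> hom D (dom D m) X" and ma: "rdx D m a = tp D (dom D m)"
    unfolding is_full_comprehension_def hom_def by auto
  then have Y: "dom D m \<in> Ob D" using homD dom_cod_in_Ob by blast
  have "leq D (dom D m) (rdx D m a) (rdx D m b)"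
    using ma forced[OF Y mh ma] leq_refl[OF Y tp_in_Pr[OF Y]] by simp
  then show ?thesis using m b unfolding is_full_comprehension_def by blast
qed

lemma full_comprehension_factor:
  assumes "is_full_comprehension D B a c" "Y \<in> Ob D" "f \<in> hom D Y B" "rdx D f a = tp D Y"
  shows "\<exists>!k. k \<in> hom D Y (dom D c) \<and> cmp D c k = f"
  using assms unfolding is_full_comprehension_def by simp

lemma full_comprehension_mono:
  assumes c: "is_full_comprehension D B a c" and a: "a \<in> Pr D B"
  shows "is_mono D c"
  unfolding is_mono_def
proof (intro conjI ballI impI)
  have ch: "c \<in> hom D (dom D c) B" and ca: "rdx D c a = tp D (dom D c)"
    using c unfolding is_full_comprehension_def hom_def by auto
  then show "c \<in> Ar D" using homD by blast
  fix X g h assume X: "X \<in> Ob D" and g: "g \<in> hom D X (dom D c)" and h: "h \<in> hom D X (dom D c)"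
    and gh: "cmp D c g = cmp D c h"
  have "rdx D (cmp D c g) a = tp D X" using rdx_comp[OF g ch a] ca rdx_tp[OF g] by simp
  then have "\<exists>!k. k \<in> hom D X (dom D c) \<and> cmp D c k = cmp D c g"
    using full_comprehension_factor[OF c X comp_in_hom[OF g ch]] by blast
  then show "g = h" using g h gh by (metis (no_types, lifting))
qed

lemma mono_comp_iso:
  assumes c: "is_mono D c" and k: "is_iso D k" "cod D k = dom D c"
  shows "is_mono D (cmp D c k)"
proof -
  have ch: "c \<in> hom D (dom D c) (cod D c)" and kh: "k \<in> hom D (dom D k) (dom D c)"
    using assms unfolding is_mono_def is_iso_def hom_def by auto
  obtain l where lh: "l \<in> hom D (dom D c) (dom D k)" and lk: "cmp D l k = idt D (dom D k)"
    using k unfolding is_iso_def by auto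
  have ckh: "cmp D c k \<in> hom D (dom D k) (cod D c)" using comp_in_hom[OF kh ch] .
  show ?thesis unfolding is_mono_def
  proof (intro conjI ballI impI)
    show "cmp D c k \<in> Ar D" using ckh homD by blast
    fix X g h assume X: "X \<in> Ob D" and "g \<in> hom D X (dom D (cmp D c k))"
      and "h \<in> hom D X (dom D (cmp D c k))" and e: "cmp D (cmp D c k) g = cmp D (cmp D c k) h"
    then have g: "g \<in> hom D X (dom D k)" and h: "h \<in> hom D X (dom D k)" using ckh homD by auto
    have "cmp D c (cmp D k g) = cmp D c (cmp D k h)"
      using e comp_assoc[OF g kh ch] comp_assoc[OF h kh ch] by simp
    then have "cmp D k g = cmp D k h"
      using c X comp_in_hom[OF g kh] comp_in_hom[OF h kh] unfolding is_mono_def by blast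
    then show "g = h"
      using comp_assoc[OF g kh lh] comp_assoc[OF h kh lh] lk comp_id_left[OF g] comp_id_left[OF h]
      by metis
  qed
qed

lemma pullback_along_mono:
  assumes c: "is_mono D c" and A: "A \<in> Ob D" and f: "f \<in> hom D A B"
    and k: "k \<in> hom D A (dom D c)" and ck: "cmp D c k = f"
  shows "is_pullback D f c (idt D A) k"
proof -
  have "c \<in> hom D (dom D c) (cod D c)" using c homI unfolding is_mono_def by blast
  moreover have "f \<in> hom D A (cod D c)" using comp_in_hom[OF k calculation] ck by simp
  ultimately have ch: "c \<in> hom D (dom D c) B" using f by (simp add: hom_def)
  have idA: "idt D A \<in> hom D A A" using id_in_hom[OF A] .
  have "\<exists>!w. w \<in> hom D X A \<and> cmp D (idt D A) w = u \<and> cmp D k w = v"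
    if X: "X \<in> Ob D" and u: "u \<in> hom D X A" and v: "v \<in> hom D X (dom D c)"
      and uv: "cmp D f u = cmp D c v" for X u v
  proof (rule ex1I[of _ u])
    have "cmp D c (cmp D k u) = cmp D c v" using comp_assoc[OF u k ch] ck uv by simp
    then have "cmp D k u = v" using c X comp_in_hom[OF u k] v unfolding is_mono_def by blast
    then show "u \<in> hom D X A \<and> cmp D (idt D A) u = u \<and> cmp D k u = v"
      using u comp_id_left[OF u] by blast
  next
    fix w assume "w \<in> hom D X A \<and> cmp D (idt D A) w = u \<and> cmp D k w = v"
    then show "w = u" using comp_id_left by metis
  qed
  moreover have "f \<in> Ar D" "c \<in> Ar D" "k \<in> Ar D" "idt D A \<in> Ar D"
    and "dom D f = A" "cod D f = B" "cod D c = B" "cod D k = dom D c" "dom D k = A"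
    and "dom D (idt D A) = A" "cod D (idt D A) = A"
    using f ch k idA by (simp_all add: hom_def)
  ultimately show ?thesis
    using ck comp_id_right[OF f] unfolding is_pullback_def by simp
qed

lemma image_factor_ex_tp:
  assumes c: "is_full_comprehension D B (ex D f (tp D A)) c"
    and A: "A \<in> Ob D" and f: "f \<in> hom D A B"
    and k: "k \<in> hom D A (dom D c)" and ck: "cmp D c k = f"
  shows "ex D k (tp D A) = tp D (dom D c)"
proof -
  have "is_mono D c" using full_comprehension_mono[OF c ex_in_Pr[OF f tp_in_Pr[OF A]]] .
  then have "is_pullback D f c (idt D A) k" using pullback_along_mono[OF _ A f k ck] by blast
  then have "rdx D c (ex D f (tp D A)) = ex D k (rdx D (idt D A) (tp D A))"
    using beck_chevalley f tp_in_Pr[OF A] by (simp add: hom_def)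
  then show ?thesis using c rdx_id[OF A tp_in_Pr[OF A]] unfolding is_full_comprehension_def by simp
qed

definition eq_formula :: "'a \<Rightarrow> 'a \<Rightarrow> 'p" where
  "eq_formula c f = rdx D (pair D (cmp D c (pr1 D (dom D c) (dom D f)))
                                  (cmp D f (pr2 D (dom D c) (dom D f)))) (delta D (cod D f))"

context
  fixes A B C c f
  assumes A: "A \<in> Ob D" and B: "B \<in> Ob D" and C: "C \<in> Ob D"
    and c: "c \<in> hom D C B" and f: "f \<in> hom D A B"
begin

lemma eq_formula_eq:
  "eq_formula c f = rdx D (pair D (cmp D c (pr1 D C A)) (cmp D f (pr2 D C A))) (delta D B)"
  using c f unfolding eq_formula_def by (simp add: hom_def)

lemma pair_prod_in_hom:
  "pair D (cmp D c (pr1 D C A)) (cmp D f (pr2 D C A)) \<in> hom D (prd D C A) (prd D B B)"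
  using pair_in_hom[OF B B prd_in_Ob[OF C A]] comp_in_hom pr1_in_hom[OF C A] pr2_in_hom[OF C A] c f
  by blast

lemma eq_formula_in_Pr: "eq_formula c f \<in> Pr D (prd D C A)"
  using eq_formula_eq rdx_in_Pr[OF pair_prod_in_hom delta_in_Pr[OF B]] by simp

lemma rdx_pair_eq_formula:
  assumes Y: "Y \<in> Ob D" and u: "u \<in> hom D Y C" and v: "v \<in> hom D Y A"
  shows "rdx D (pair D u v) (eq_formula c f) = rdx D (pair D (cmp D c u) (cmp D f v)) (delta D B)"
  using eq_formula_eq rdx_comp[OF pair_in_hom[OF C A Y u v] pair_prod_in_hom delta_in_Pr[OF B]]
    pair_prod_comp_pair[OF C A B B Y c f u v]
  by simp

lemma eq_formula_forced_iff:
  assumes "is_extensional D" and Y: "Y \<in> Ob D" and u: "u \<in> hom D Y C" and v: "v \<in> hom D Y A"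
  shows "rdx D (pair D u v) (eq_formula c f) = tp D Y \<longleftrightarrow> cmp D c u = cmp D f v"
  using rdx_pair_eq_formula[OF Y u v]
    extensional_eq_iff[OF assms(1) Y B comp_in_hom[OF u c] comp_in_hom[OF v f]] by simp

end

lemma eq_formula_total:
  assumes E: "is_extensional D" and A: "A \<in> Ob D" and B: "B \<in> Ob D" and C: "C \<in> Ob D"
    and c: "c \<in> hom D C B" and f: "f \<in> hom D A B"
    and k: "k \<in> hom D A C" and ck: "cmp D c k = f" and ex_k: "ex D k (tp D A) = tp D C"
  shows "leq D C (tp D C) (ex D (pr1 D C A) (eq_formula c f))"
proof -
  let ?F = "eq_formula c f" and ?s = "pair D k (idt D A)"
  have F: "?F \<in> Pr D (prd D C A)" using eq_formula_in_Pr[OF A B C c f] .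
  have p1: "pr1 D C A \<in> hom D (prd D C A) C" using pr1_in_hom[OF C A] .
  have exF: "ex D (pr1 D C A) ?F \<in> Pr D C" using ex_in_Pr[OF p1 F] .
  have idA: "idt D A \<in> hom D A A" using id_in_hom[OF A] .
  have s: "?s \<in> hom D A (prd D C A)" using pair_in_hom[OF C A A k idA] .
  have "rdx D ?s ?F = tp D A"
    using eq_formula_forced_iff[OF A B C c f E A k idA] ck comp_id_right[OF f] by simp
  moreover have "leq D (prd D C A) ?F (rdx D (pr1 D C A) (ex D (pr1 D C A) ?F))"
    using ex_leq_iff[OF p1 F exF] leq_refl[OF C exF] by blast
  then have "leq D A (rdx D ?s ?F) (rdx D ?s (rdx D (pr1 D C A) (ex D (pr1 D C A) ?F)))"
    using rdx_mono[OF s F rdx_in_Pr[OF p1 exF]] by blast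
  ultimately have "leq D A (tp D A) (rdx D k (ex D (pr1 D C A) ?F))"
    using rdx_comp[OF s p1 exF] pr1_pair[OF C A A k idA] by simp
  then show ?thesis using ex_leq_iff[OF k tp_in_Pr[OF A] exF] ex_k by simp
qed

lemma eq_formula_single_valued:
  assumes E: "is_extensional D" and FC: "has_full_comprehensions D"
    and A: "A \<in> Ob D" and B: "B \<in> Ob D" and C: "C \<in> Ob D"
    and c: "c \<in> hom D C B" and f: "f \<in> hom D A B" and mono: "is_mono D f"
    and YAA: "YAA = prd D C (prd D A A)"
    and p1: "p1 = pr1 D C (prd D A A)"
    and p2: "p2 = cmp D (pr1 D A A) (pr2 D C (prd D A A))"
    and p3: "p3 = cmp D (pr2 D A A) (pr2 D C (prd D A A))"
  shows "leq D YAA (mt D YAA (rdx D (pair D p1 p2) (eq_formula c f))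
                            (rdx D (pair D p1 p3) (eq_formula c f)))
                   (rdx D (pair D p2 p3) (delta D A))"
proof -
  let ?F = "eq_formula c f"
  have F: "?F \<in> Pr D (prd D C A)" using eq_formula_in_Pr[OF A B C c f] .
  have AA: "prd D A A \<in> Ob D" using prd_in_Ob[OF A A] .
  have Y3: "YAA \<in> Ob D" using YAA prd_in_Ob[OF C AA] by simp
  have h1: "p1 \<in> hom D YAA C" using p1 YAA pr1_in_hom[OF C AA] by simp
  have h2: "p2 \<in> hom D YAA A" and h3: "p3 \<in> hom D YAA A"
    using p2 p3 YAA comp_in_hom[OF pr2_in_hom[OF C AA]] pr1_in_hom[OF A A] pr2_in_hom[OF A A]
    by blast+
  have F12: "rdx D (pair D p1 p2) ?F \<in> Pr D YAA" and F13: "rdx D (pair D p1 p3) ?F \<in> Pr D YAA"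
    using rdx_in_Pr[OF pair_in_hom[OF C A Y3 h1] F] h2 h3 by blast+
  have \<delta>: "rdx D (pair D p2 p3) (delta D A) \<in> Pr D YAA"
    using rdx_in_Pr[OF pair_in_hom[OF A A Y3 h2 h3] delta_in_Pr[OF A]] .
  show ?thesis
  proof (rule leq_if_forced[OF FC Y3 mt_in_Pr[OF Y3 F12 F13] \<delta>])
    fix Y h assume Y: "Y \<in> Ob D" and h: "h \<in> hom D Y YAA"
      and forced: "rdx D h (mt D YAA (rdx D (pair D p1 p2) ?F) (rdx D (pair D p1 p3) ?F)) = tp D Y"
    have "rdx D (pair D (cmp D p1 h) (cmp D p2 h)) ?F = tp D Y"
      and "rdx D (pair D (cmp D p1 h) (cmp D p3 h)) ?F = tp D Y"
      using forced rdx_mt[OF h F12 F13] mt_eq_tpD[OF Y rdx_in_Pr[OF h F12] rdx_in_Pr[OF h F13]]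
        rdx_rdx_pair[OF C A Y Y3 h1 h2 h F] rdx_rdx_pair[OF C A Y Y3 h1 h3 h F]
      by simp_all
    then have "cmp D c (cmp D p1 h) = cmp D f (cmp D p2 h)"
      and "cmp D c (cmp D p1 h) = cmp D f (cmp D p3 h)"
      using eq_formula_forced_iff[OF A B C c f E Y comp_in_hom[OF h h1]]
        comp_in_hom[OF h h2] comp_in_hom[OF h h3] by blast+
    then have "cmp D p2 h = cmp D p3 h"
      using mono Y comp_in_hom[OF h h2] comp_in_hom[OF h h3] f
      unfolding is_mono_def by (simp add: hom_def)
    then show "rdx D h (rdx D (pair D p2 p3) (delta D A)) = tp D Y"
      using extensional_eq_iff[OF E Y A comp_in_hom[OF h h2] comp_in_hom[OF h h3]]
        rdx_rdx_pair[OF A A Y Y3 h2 h3 h delta_in_Pr[OF A]] by simp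
  qed
qed

lemma eq_formula_functional:
  assumes E: "is_extensional D" and FC: "has_full_comprehensions D"
    and A: "A \<in> Ob D" and B: "B \<in> Ob D" and C: "C \<in> Ob D"
    and c: "c \<in> hom D C B" and f: "f \<in> hom D A B" and mono: "is_mono D f"
    and k: "k \<in> hom D A C" and ck: "cmp D c k = f" and ex_k: "ex D k (tp D A) = tp D C"
  shows "is_functional D C A (eq_formula c f)"
  using eq_formula_in_Pr[OF A B C c f] eq_formula_total[OF E A B C c f k ck ex_k]
    eq_formula_single_valued[OF E FC A B C c f mono refl refl refl refl]
  unfolding is_functional_def Let_def by blast

lemma graph_formula_at_graph:
  assumes E: "is_extensional D" and C: "C \<in> Ob D" and A: "A \<in> Ob D" and g: "g \<in> hom D C A"
  shows "rdx D (pair D (idt D C) g) (rdx D (pair D (cmp D g (pr1 D C A)) (pr2 D C A)) (delta D A))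
       = tp D C"
proof -
  have idC: "idt D C \<in> hom D C C" and idA: "idt D A \<in> hom D A A"
    using id_in_hom C A by blast+
  have "pair D (cmp D g (pr1 D C A)) (pr2 D C A)
      = pair D (cmp D g (pr1 D C A)) (cmp D (idt D A) (pr2 D C A))"
    using comp_id_left[OF pr2_in_hom[OF C A]] by simp
  moreover have "cmp D \<dots> (pair D (idt D C) g) = pair D g g"
    using pair_prod_comp_pair[OF C A A A C g idA idC g] comp_id_right[OF g] comp_id_left[OF g]
    by simp
  moreover have "pair D (cmp D g (pr1 D C A)) (cmp D (idt D A) (pr2 D C A))
      \<in> hom D (prd D C A) (prd D A A)"
    using pair_in_hom[OF A A prd_in_Ob[OF C A]] comp_in_hom pr1_in_hom[OF C A] pr2_in_hom[OF C A]
      g idA by blast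
  ultimately show ?thesis
    using rdx_comp[OF pair_in_hom[OF C A C idC g] _ delta_in_Pr[OF A]]
      extensional_eq_iff[OF E C A g g] by metis
qed

lemma iso_if_mono_factors_both_ways:
  assumes c: "is_mono D c" and f: "is_mono D f" and A: "A \<in> Ob D" and C: "C \<in> Ob D"
    and ch: "c \<in> hom D C B" and fh: "f \<in> hom D A B"
    and k: "k \<in> hom D A C" and g: "g \<in> hom D C A"
    and ck: "cmp D c k = f" and fg: "cmp D f g = c"
  shows "is_iso D k"
proof -
  have "cmp D c (cmp D k g) = cmp D c (idt D C)"
    using comp_assoc[OF g k ch] ck fg comp_id_right[OF ch] by simp
  then have kg: "cmp D k g = idt D C"
    using c C comp_in_hom[OF g k] id_in_hom[OF C] ch unfolding is_mono_def by (simp add: hom_def)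
  have "cmp D f (cmp D g k) = cmp D f (idt D A)"
    using comp_assoc[OF k g fh] ck fg comp_id_right[OF fh] by simp
  then have gk: "cmp D g k = idt D A"
    using f A comp_in_hom[OF k g] id_in_hom[OF A] fh unfolding is_mono_def by (simp add: hom_def)
  show ?thesis
    using k g kg gk unfolding is_iso_def by (auto simp: hom_def)
qed

lemma mono_factors_through_image_comprehension:
  assumes E: "is_extensional D" and CC: "is_cauchy_complete D" and FC: "has_full_comprehensions D"
    and A: "A \<in> Ob D" and B: "B \<in> Ob D" and f: "f \<in> hom D A B" and mono: "is_mono D f"
  shows "\<exists>c k. is_full_comprehension D B (ex D f (tp D A)) c \<and> is_iso D k \<and>
                cod D k = dom D c \<and> f = cmp D c k"
proof -
  have \<beta>: "ex D f (tp D A) \<in> Pr D B" using ex_in_Pr[OF f tp_in_Pr[OF A]] .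
  then obtain c where c: "is_full_comprehension D B (ex D f (tp D A)) c"
    using FC B unfolding has_full_comprehensions_def by blast
  define C where "C = dom D c"
  have ch: "c \<in> hom D C B" using c unfolding is_full_comprehension_def C_def hom_def by simp
  then have C: "C \<in> Ob D" using homD dom_cod_in_Ob by blast
  obtain k where k: "k \<in> hom D A C" and ck: "cmp D c k = f"
    using full_comprehension_factor[OF c A f rdx_ex_tp[OF f A]] C_def by blast
  have "is_functional D C A (eq_formula c f)"
    using eq_formula_functional[OF E FC A B C ch f mono k ck]
      image_factor_ex_tp[OF c A f] k ck C_def by blast
  then obtain g where g: "g \<in> hom D C A"
    and g_graph: "rdx D (pair D (cmp D g (pr1 D C A)) (pr2 D C A)) (delta D A) = eq_formula c f"
    using CC A C unfolding is_cauchy_complete_def cauchy_complete_object_def by blast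
  have "rdx D (pair D (idt D C) g) (eq_formula c f) = tp D C"
    using graph_formula_at_graph[OF E C A g] g_graph by simp
  then have "cmp D f g = c"
    using eq_formula_forced_iff[OF A B C ch f E C id_in_hom[OF C] g] comp_id_right[OF ch] by simp
  then have "is_iso D k"
    using iso_if_mono_factors_both_ways[OF full_comprehension_mono[OF c \<beta>] mono A C ch f k g ck]
    by blast
  then show ?thesis using c k ck C_def by (auto simp: hom_def)
qed

end

theorem lemma5p1:
  fixes D :: "('o, 'a, 'p) doctrine"
  assumes "is_regular_doctrine D"
    and "is_extensional D"
    and "is_cauchy_complete D"
    and "has_full_comprehensions D"
    and "A \<in> Ob D" and "B \<in> Ob D" and "f \<in> hom D A B"
  shows "(is_mono D f \<longleftrightarrow>
            (\<exists>\<beta> \<in> Pr D B. \<exists>c k. is_full_comprehension D B \<beta> c \<and> is_iso D k \<and>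
                cod D k = dom D c \<and> f = cmp D c k))
       \<and> (is_mono D f \<longrightarrow>
            (\<exists>c k. is_full_comprehension D B (ex D f (tp D A)) c \<and> is_iso D k \<and>
                cod D k = dom D c \<and> f = cmp D c k))"
proof -
  interpret regular_doctrine D using assms(1) by (rule regular_doctrine.intro)
  have "is_mono D f \<Longrightarrow> \<exists>c k. is_full_comprehension D B (ex D f (tp D A)) c \<and>
      is_iso D k \<and> cod D k = dom D c \<and> f = cmp D c k"
    using mono_factors_through_image_comprehension assms(2-7) by blast
  moreover have "ex D f (tp D A) \<in> Pr D B" using ex_in_Pr[OF assms(7) tp_in_Pr[OF assms(5)]] .
  moreover have "is_mono D (cmp D c k)"
    if "is_full_comprehension D B \<beta> c" "\<beta> \<in> Pr D B" "is_iso D k" "cod D k = dom D c" for \<beta> c k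
    using that full_comprehension_mono mono_comp_iso by blast
  ultimately show ?thesis by blast
qed

end
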